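(* A poset is a p-morphic image of an $n$-comb (for some $n$) if and only if it is a broken $m$-comb for some $m$.
   Context: A poset $P$ is an $n$-comb if $P=\{x_1,\dots,x_n\}\sqcup\{y_1,\dots,y_n\}$ with order given by: for each $z\in P$, $y_i\le z$ iff $y_i=z$; and $x_i\le z$ iff ($z=x_j$ with $i\le j$) or ($z=y_j$ with $i\le j$). (So $x_1<\dots<x_n$ is a chain and each $x_i$ lies below $y_j$ for $j\ge i$.) A broken $n$-comb is a subposet $Q\subseteq P$ of an $n$-comb $P$ with $\{x_1,\dots,x_n\}\subseteq Q$, with the induced order. A p-morphism $f:P\to Q$ is an order-preserving map such that whenever $f(x)\le y$ there is $x'\ge x$ with $f(x')=y$; $Q$ is a p-morphic image of $P$ if there is a surjective p-morphism. *)

theory Defs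
  imports Main
begin

definition is_poset :: "'a set \<Rightarrow> ('a \<Rightarrow> 'a \<Rightarrow> bool) \<Rightarrow> bool" where
  "is_poset A le \<longleftrightarrow>
     (\<forall>x\<in>A. le x x) \<and>
     (\<forall>x\<in>A. \<forall>y\<in>A. le x y \<and> le y x \<longrightarrow> x = y) \<and>
     (\<forall>x\<in>A. \<forall>y\<in>A. \<forall>z\<in>A. le x y \<and> le y z \<longrightarrow> le x z)"

text \<open>Elements of a comb: CX i stands for x_i, CY i for y_i.\<close>
datatype comb_elt = CX nat | CY nat

definition comb_carrier :: "nat \<Rightarrow> comb_elt set" where
  "comb_carrier n = {CX i | i. 1 \<le> i \<and> i \<le> n} \<union> {CY i | i. 1 \<le> i \<and> i \<le> n}"

fun comb_le :: "comb_elt \<Rightarrow> comb_elt \<Rightarrow> bool" where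
  "comb_le (CX i) (CX j) = (i \<le> j)"
| "comb_le (CX i) (CY j) = (i \<le> j)"
| "comb_le (CY i) (CY j) = (i = j)"
| "comb_le (CY i) (CX j) = False"

definition broken_comb :: "nat \<Rightarrow> comb_elt set \<Rightarrow> bool" where
  "broken_comb m Q \<longleftrightarrow> Q \<subseteq> comb_carrier m \<and> {CX i | i. 1 \<le> i \<and> i \<le> m} \<subseteq> Q"

definition p_morphism ::
  "'a set \<Rightarrow> ('a \<Rightarrow> 'a \<Rightarrow> bool) \<Rightarrow> 'b set \<Rightarrow> ('b \<Rightarrow> 'b \<Rightarrow> bool) \<Rightarrow> ('a \<Rightarrow> 'b) \<Rightarrow> bool" where
  "p_morphism A leA B leB f \<longleftrightarrow>
     (\<forall>x\<in>A. f x \<in> B) \<and>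
     (\<forall>x\<in>A. \<forall>y\<in>A. leA x y \<longrightarrow> leB (f x) (f y)) \<and>
     (\<forall>x\<in>A. \<forall>y\<in>B. leB (f x) y \<longrightarrow> (\<exists>x'\<in>A. leA x x' \<and> f x' = y))"

definition p_morphic_image ::
  "'b set \<Rightarrow> ('b \<Rightarrow> 'b \<Rightarrow> bool) \<Rightarrow> 'a set \<Rightarrow> ('a \<Rightarrow> 'a \<Rightarrow> bool) \<Rightarrow> bool" where
  "p_morphic_image B leB A leA \<longleftrightarrow> (\<exists>f. p_morphism A leA B leB f \<and> f ` A = B)"

definition order_iso ::
  "'a set \<Rightarrow> ('a \<Rightarrow> 'a \<Rightarrow> bool) \<Rightarrow> 'b set \<Rightarrow> ('b \<Rightarrow> 'b \<Rightarrow> bool) \<Rightarrow> ('a \<Rightarrow> 'b) \<Rightarrow> bool" where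
  "order_iso A leA B leB g \<longleftrightarrow> bij_betw g A B \<and> (\<forall>x\<in>A. \<forall>y\<in>A. leA x y \<longleftrightarrow> leB (g x) (g y))"

end

theory Submission
  imports Defs
begin

text \<open>
  A broken comb is the image of a full comb under the retraction that fixes it and sends every
  missing tooth y_j to the top element (y_m if present, x_m otherwise); composing with an order
  isomorphism preserves being a p-morphic image.

  Conversely, in a p-morphic image of an n-comb the images of x_1, ..., x_n form a finite chain
  below everything, and each remaining element is the image of some y_j, hence maximal. Such an
  element w equals the image of y_i for the largest i with f(x_i) below w, so it is determined
  by the set of chain elements below it. These sets are nested, so ranking every element by the
  number of chain elements below it embeds the poset into a comb: chain elements go to x_rank,
  the others to y_rank.
\<close>

lemma CX_in_comb_carrier [simp]: "CX i \<in> comb_carrier n \<longleftrightarrow> 1 \<le> i \<and> i \<le> n"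
  and CY_in_comb_carrier [simp]: "CY i \<in> comb_carrier n \<longleftrightarrow> 1 \<le> i \<and> i \<le> n"
  by (auto simp: comb_carrier_def)

lemma comb_le_refl [simp]: "comb_le z z"
  by (cases z) auto

lemma comb_le_CY_iff: "comb_le (CY j) z \<longleftrightarrow> z = CY j"
  by (cases z) auto

lemma p_morphism_comp:
  assumes f: "p_morphism A leA B leB f" and h: "p_morphism B leB C leC h"
  shows "p_morphism A leA C leC (h \<circ> f)"
  unfolding p_morphism_def
proof (intro conjI ballI impI)
  fix x z assume x: "x \<in> A" and z: "z \<in> C" and le: "leC ((h \<circ> f) x) z"
  have "f x \<in> B" using f x by (simp add: p_morphism_def)
  then obtain y where y: "y \<in> B" "leB (f x) y" "h y = z"
    using h z le unfolding p_morphism_def by (metis comp_apply)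
  then obtain x' where "x' \<in> A" "leA x x'" "f x' = y"
    using f x y unfolding p_morphism_def by blast
  then show "\<exists>x'\<in>A. leA x x' \<and> (h \<circ> f) x' = z"
    using y by auto
qed (use f h in \<open>auto simp: p_morphism_def\<close>)

lemma order_iso_p_morphism:
  assumes "order_iso A leA B leB g"
  shows "p_morphism A leA B leB g"
  using assms unfolding order_iso_def p_morphism_def bij_betw_def by fastforce

lemma order_iso_inv_into:
  assumes "order_iso A leA B leB g"
  shows "order_iso B leB A leA (inv_into A g)"
proof -
  have bij: "bij_betw g A B" and le: "\<forall>x\<in>A. \<forall>y\<in>A. leA x y \<longleftrightarrow> leB (g x) (g y)"
    using assms by (auto simp: order_iso_def)
  have "leB x y \<longleftrightarrow> leA (inv_into A g x) (inv_into A g y)" if "x \<in> B" "y \<in> B" for x y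
    using le that bij bij_betw_imp_surj_on inv_into_into f_inv_into_f by metis
  then show ?thesis
    using bij_betw_inv_into[OF bij] by (simp add: order_iso_def)
qed

lemma p_morphic_image_order_iso:
  assumes "p_morphic_image B leB P leP" and "order_iso A leA B leB g"
  shows "p_morphic_image A leA P leP"
proof -
  obtain f where f: "p_morphism P leP B leB f" "f ` P = B"
    using assms(1) by (auto simp: p_morphic_image_def)
  have g': "order_iso B leB A leA (inv_into A g)"
    using assms(2) by (rule order_iso_inv_into)
  have "(inv_into A g \<circ> f) ` P = inv_into A g ` B"
    unfolding f(2)[symmetric] by (rule image_comp[symmetric])
  also have "\<dots> = A"
    using g' by (simp add: order_iso_def bij_betw_def)
  finally have "(inv_into A g \<circ> f) ` P = A" .
  with p_morphism_comp[OF f(1) order_iso_p_morphism[OF g']] show ?thesis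
    unfolding p_morphic_image_def by blast
qed

lemma broken_comb_p_morphic_image:
  assumes "broken_comb m Q"
  shows "p_morphic_image Q comb_le (comb_carrier m) comb_le"
proof -
  have Q: "Q \<subseteq> comb_carrier m" and CX_Q: "\<And>i. 1 \<le> i \<Longrightarrow> i \<le> m \<Longrightarrow> CX i \<in> Q"
    using assms by (auto simp: broken_comb_def)
  define top where "top = (if CY m \<in> Q then CY m else CX m)"
  define r where "r z = (if z \<in> Q then z else top)" for z
  have top_above: "comb_le (CX i) top" if "i \<le> m" for i
    using that by (simp add: top_def)
  have top_maximal: "y = top" if "y \<in> Q" "comb_le top y" for y
  proof (cases "CY m \<in> Q")
    case True
    then show ?thesis using that by (simp add: top_def comb_le_CY_iff)
  next
    case False
    then show ?thesis using that subsetD[OF Q, of y] by (cases y) (auto simp: top_def)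
  qed
  have top_in: "top \<in> Q" if "z \<in> comb_carrier m" for z
    using that CX_Q by (cases z) (auto simp: top_def)
  have "p_morphism (comb_carrier m) comb_le Q comb_le r"
    unfolding p_morphism_def
  proof (intro conjI ballI impI)
    fix x assume "x \<in> comb_carrier m"
    then show "r x \<in> Q" using top_in by (simp add: r_def)
  next
    fix x y assume x: "x \<in> comb_carrier m" and y: "y \<in> comb_carrier m" and le: "comb_le x y"
    show "comb_le (r x) (r y)"
    proof (cases "x \<in> Q")
      case True
      with x y le show ?thesis
        by (cases x; cases y) (auto simp: r_def top_def)
    next
      case False
      with x y le CX_Q have "y = x"
        by (cases x) (auto simp: comb_le_CY_iff)
      then show ?thesis by simp
    qed
  next
    fix x y assume x: "x \<in> comb_carrier m" and y: "y \<in> Q" and le: "comb_le (r x) y"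
    show "\<exists>x'\<in>comb_carrier m. comb_le x x' \<and> r x' = y"
    proof (cases "x \<in> Q")
      case True
      then show ?thesis using y le Q by (intro bexI[of _ y]) (auto simp: r_def)
    next
      case False
      then show ?thesis using x y le top_maximal by (intro bexI[of _ x]) (auto simp: r_def)
    qed
  qed
  moreover have "r ` comb_carrier m = Q"
    using Q top_in by (force simp: r_def)
  ultimately show ?thesis
    by (auto simp: p_morphic_image_def)
qed

subsection \<open>Comb-shaped posets embed into combs\<close>

locale comb_shaped =
  fixes A :: "'a set" and le :: "'a \<Rightarrow> 'a \<Rightarrow> bool" and C :: "'a set"
  assumes poset: "is_poset A le"
    and finite_chain: "finite C"
    and chain_subset: "C \<subseteq> A"
    and chain: "\<And>c c'. c \<in> C \<Longrightarrow> c' \<in> C \<Longrightarrow> le c c' \<or> le c' c"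
    and rooted: "\<And>a. a \<in> A \<Longrightarrow> \<exists>c\<in>C. le c a"
    and teeth_maximal: "\<And>w a. w \<in> A - C \<Longrightarrow> a \<in> A \<Longrightarrow> le w a \<Longrightarrow> a = w"
    and teeth_separated: "\<And>w w'. w \<in> A - C \<Longrightarrow> w' \<in> A - C \<Longrightarrow>
          {c \<in> C. le c w} = {c \<in> C. le c w'} \<Longrightarrow> w = w'"
begin

lemma le_refl_on: "a \<in> A \<Longrightarrow> le a a"
  and le_antisym_on: "a \<in> A \<Longrightarrow> b \<in> A \<Longrightarrow> le a b \<Longrightarrow> le b a \<Longrightarrow> a = b"
  and le_trans_on: "a \<in> A \<Longrightarrow> b \<in> A \<Longrightarrow> c \<in> A \<Longrightarrow> le a b \<Longrightarrow> le b c \<Longrightarrow> le a c"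
  using poset unfolding is_poset_def by blast+

definition below :: "'a \<Rightarrow> 'a set" where
  "below a = {c \<in> C. le c a}"

definition rank :: "'a \<Rightarrow> nat" where
  "rank a = card (below a)"

lemma below_comparable:
  assumes "a \<in> A" "b \<in> A"
  shows "below a \<subseteq> below b \<or> below b \<subseteq> below a"
  using assms chain chain_subset le_trans_on unfolding below_def by blast

lemma below_subset_iff_rank_le:
  assumes "a \<in> A" "b \<in> A"
  shows "below a \<subseteq> below b \<longleftrightarrow> rank a \<le> rank b"
proof
  show "below a \<subseteq> below b \<Longrightarrow> rank a \<le> rank b"
    unfolding rank_def by (rule card_mono) (simp_all add: below_def finite_chain)
next
  assume "rank a \<le> rank b"
  moreover have "rank b < rank a" if "below b \<subset> below a"
    unfolding rank_def using that by (intro psubset_card_mono) (auto simp: below_def finite_chain)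
  ultimately show "below a \<subseteq> below b"
    using below_comparable[OF assms] by auto
qed

lemma le_iff_rank_le:
  assumes "c \<in> C" "a \<in> A"
  shows "le c a \<longleftrightarrow> rank c \<le> rank a"
proof -
  have "le c a \<longleftrightarrow> below c \<subseteq> below a"
    using assms chain_subset le_refl_on le_trans_on unfolding below_def by blast
  with assms chain_subset show ?thesis
    by (simp add: below_subset_iff_rank_le subsetD)
qed

lemma inj_on_rank_chain: "inj_on rank C"
proof (rule inj_onI)
  fix c c' assume "c \<in> C" "c' \<in> C" "rank c = rank c'"
  then have "le c c'" "le c' c"
    using le_iff_rank_le chain_subset by auto
  then show "c = c'"
    using le_antisym_on \<open>c \<in> C\<close> \<open>c' \<in> C\<close> chain_subset by blast
qed

lemma inj_on_rank_teeth: "inj_on rank (A - C)"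
proof (rule inj_onI)
  fix w w' assume "w \<in> A - C" "w' \<in> A - C" "rank w = rank w'"
  then have "below w = below w'"
    using below_subset_iff_rank_le by (metis Diff_iff order_antisym order_refl)
  then show "w = w'"
    using teeth_separated \<open>w \<in> A - C\<close> \<open>w' \<in> A - C\<close> by (simp add: below_def)
qed

lemma rank_bounds:
  assumes "a \<in> A"
  shows "1 \<le> rank a" "rank a \<le> card C"
proof -
  have "below a \<noteq> {}"
    using rooted[OF assms] by (auto simp: below_def)
  then show "1 \<le> rank a"
    by (simp add: rank_def below_def finite_chain Suc_le_eq card_gt_0_iff)
  show "rank a \<le> card C"
    unfolding rank_def below_def by (rule card_mono) (auto simp: finite_chain)
qed

lemma rank_chain_image: "rank ` C = {1..card C}"
proof (rule card_subset_eq)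
  show "rank ` C \<subseteq> {1..card C}"
    using rank_bounds chain_subset by auto
  show "card (rank ` C) = card {1..card C}"
    by (simp add: card_image inj_on_rank_chain)
qed simp

definition embed :: "'a \<Rightarrow> comb_elt" where
  "embed a = (if a \<in> C then CX (rank a) else CY (rank a))"

lemma le_iff_embed_le:
  assumes a: "a \<in> A" and b: "b \<in> A"
  shows "le a b \<longleftrightarrow> comb_le (embed a) (embed b)"
proof (cases "a \<in> C")
  case True
  then show ?thesis
    using le_iff_rank_le[OF True b] by (simp add: embed_def)
next
  case False
  have "le a b \<longleftrightarrow> b = a"
    using teeth_maximal False a b le_refl_on by blast
  also have "\<dots> \<longleftrightarrow> b \<notin> C \<and> rank a = rank b"
    using inj_on_rank_teeth False a b by (auto dest: inj_onD)
  finally show ?thesis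
    using False by (simp add: embed_def)
qed

lemma order_iso_embed: "order_iso A le (embed ` A) comb_le embed"
proof -
  have "inj_on embed A"
    by (rule inj_onI) (metis le_iff_embed_le comb_le_refl le_antisym_on)
  then show ?thesis
    by (simp add: order_iso_def bij_betw_def le_iff_embed_le)
qed

lemma broken_comb_embed: "broken_comb (card C) (embed ` A)"
  unfolding broken_comb_def
proof
  show "embed ` A \<subseteq> comb_carrier (card C)"
    using rank_bounds by (auto simp: embed_def)
  show "{CX i |i. 1 \<le> i \<and> i \<le> card C} \<subseteq> embed ` A"
  proof clarify
    fix i assume "1 \<le> i" "i \<le> card C"
    then obtain c where "c \<in> C" "i = rank c"
      using rank_chain_image by (metis atLeastAtMost_iff imageE)
    then show "CX i \<in> embed ` A"
      using chain_subset by (intro image_eqI[of _ _ c]) (auto simp: embed_def)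
  qed
qed

lemma iso_broken_comb: "\<exists>m Q g. broken_comb m Q \<and> order_iso A le Q comb_le g"
  using broken_comb_embed order_iso_embed by blast

end

subsection \<open>P-morphic images of combs are comb-shaped\<close>

locale comb_image =
  fixes A :: "'a set" and le :: "'a \<Rightarrow> 'a \<Rightarrow> bool" and n :: nat and f :: "comb_elt \<Rightarrow> 'a"
  assumes p_morphism: "p_morphism (comb_carrier n) comb_le A le f"
    and image: "f ` comb_carrier n = A"
begin

lemma p_morphism_forth: "z \<in> comb_carrier n \<Longrightarrow> z' \<in> comb_carrier n \<Longrightarrow> comb_le z z' \<Longrightarrow> le (f z) (f z')"
  and p_morphism_back: "z \<in> comb_carrier n \<Longrightarrow> a \<in> A \<Longrightarrow> le (f z) a \<Longrightarrow>
    \<exists>z'\<in>comb_carrier n. comb_le z z' \<and> f z' = a"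
  using p_morphism unfolding p_morphism_def by blast+

definition spine :: "'a set" where
  "spine = f ` CX ` {1..n}"

lemma spine_subset: "spine \<subseteq> A"
  using image by (auto simp: spine_def)

lemma spine_chain: "c \<in> spine \<Longrightarrow> c' \<in> spine \<Longrightarrow> le c c' \<or> le c' c"
  unfolding spine_def by (auto intro!: p_morphism_forth simp: nat_le_linear)

lemma spine_rooted:
  assumes "a \<in> A"
  shows "le (f (CX 1)) a"
proof -
  obtain z where "z \<in> comb_carrier n" "a = f z"
    using assms image by auto
  then show ?thesis
    by (cases z) (auto intro!: p_morphism_forth)
qed

lemma off_spine_tooth:
  assumes "w \<in> A - spine"
  obtains j where "1 \<le> j" "j \<le> n" "w = f (CY j)"
  using assms image unfolding spine_def comb_carrier_def by auto

lemma tooth_maximal: "a \<in> A \<Longrightarrow> le (f (CY j)) a \<Longrightarrow> 1 \<le> j \<Longrightarrow> j \<le> n \<Longrightarrow> a = f (CY j)"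
  using p_morphism_back[of "CY j" a] by (auto simp: comb_le_CY_iff)

lemma tooth_at_top_index:
  assumes w: "w \<in> A - spine" and i: "1 \<le> i" "i \<le> n" "le (f (CX i)) w"
    and top: "\<And>l. i < l \<Longrightarrow> l \<le> n \<Longrightarrow> \<not> le (f (CX l)) w"
  shows "w = f (CY i)"
proof -
  obtain z where z: "z \<in> comb_carrier n" "comb_le (CX i) z" "f z = w"
    using p_morphism_back[of "CX i" w] w i by auto
  then obtain l where l: "z = CY l" "i \<le> l" "l \<le> n"
    using w by (cases z) (auto simp: spine_def)
  have "le (f (CX l)) w"
    using p_morphism_forth[of "CX l" "CY l"] z l i by auto
  with top l have "l = i"
    by (metis le_neq_implies_less)
  with z l show ?thesis by simp
qed

lemma teeth_separated:
  assumes w: "w \<in> A - spine" and w': "w' \<in> A - spine"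
    and below: "{c \<in> spine. le c w} = {c \<in> spine. le c w'}"
  shows "w = w'"
proof -
  define I where "I v = {i \<in> {1..n}. le (f (CX i)) v}" for v
  have "I w = I w'"
    using below unfolding I_def spine_def by blast
  obtain j where "1 \<le> j" "j \<le> n"
    using w by (rule off_spine_tooth)
  then have "1 \<in> I w"
    using spine_rooted w by (auto simp: I_def)
  moreover have "finite (I w)"
    by (simp add: I_def)
  ultimately have top: "Max (I w) \<in> I w" "\<And>l. l \<in> I w \<Longrightarrow> l \<le> Max (I w)"
    using Max_in Max_ge by blast+
  have "w = f (CY (Max (I w)))"
    using top by (intro tooth_at_top_index[OF w]) (fastforce simp: I_def)+
  moreover have "w' = f (CY (Max (I w)))"
    using top \<open>I w = I w'\<close> by (intro tooth_at_top_index[OF w']) (fastforce simp: I_def)+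
  ultimately show ?thesis by simp
qed

lemma comb_shaped:
  assumes "is_poset A le"
  shows "comb_shaped A le spine"
proof
  fix w a assume "w \<in> A - spine" "a \<in> A" "le w a"
  then show "a = w"
    by (metis off_spine_tooth tooth_maximal)
next
  fix a assume "a \<in> A"
  then have "1 \<le> n"
    using image by (auto simp: comb_carrier_def)
  with \<open>a \<in> A\<close> show "\<exists>c\<in>spine. le c a"
    using spine_rooted unfolding spine_def by (intro bexI[of _ "f (CX 1)"]) auto
qed (use assms spine_subset spine_chain teeth_separated in \<open>auto simp: spine_def\<close>)

end

theorem mainTheorem8:
  fixes A :: "'a set" and le :: "'a \<Rightarrow> 'a \<Rightarrow> bool"
  assumes "is_poset A le"
  shows "(\<exists>n. p_morphic_image A le (comb_carrier n) comb_le) \<longleftrightarrow>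
         (\<exists>m Q g. broken_comb m Q \<and> order_iso A le Q comb_le g)"
proof
  assume "\<exists>n. p_morphic_image A le (comb_carrier n) comb_le"
  then obtain n f where "comb_image A le n f"
    by (auto simp: p_morphic_image_def comb_image_def)
  then interpret comb_image A le n f .
  show "\<exists>m Q g. broken_comb m Q \<and> order_iso A le Q comb_le g"
    using comb_shaped[OF assms] by (rule comb_shaped.iso_broken_comb)
next
  assume "\<exists>m Q g. broken_comb m Q \<and> order_iso A le Q comb_le g"
  then obtain m Q g where "broken_comb m Q" "order_iso A le Q comb_le g"
    by blast
  then show "\<exists>n. p_morphic_image A le (comb_carrier n) comb_le"
    using broken_comb_p_morphic_image p_morphic_image_order_iso by blast
qed

end
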